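(* For every $(r,s,i,j)\in\mu^{-1}(0)^{rss}$, the closure of the orbit $B\cdot(r,s,i,j)$ contains a point of the form $(\operatorname{diag}(r),d,0,0)$ with $d$ a diagonal matrix.
   Context: $B\subset GL_n(\mathbb{C})$ is the group of invertible upper triangular matrices, $\mathfrak{b}$ the upper triangular matrices, $\mathfrak{n}^+$ strictly upper triangular, $\mathfrak{b}^*=\mathfrak{gl}_n/\mathfrak{n}^+$. $B$ acts on $\mathfrak{b}\times\mathfrak{b}^*\times\mathbb{C}^n\times(\mathbb{C}^n)^*$ by $b\cdot(r,s,i,j)=(brb^{-1},bsb^{-1},bi,jb^{-1})$, with moment map $\mu(r,s,i,j)=[r,s]+ij\bmod\mathfrak{n}^+$; $\mu^{-1}(0)^{rss}$ is the set of zeros of $\mu$ with $r$ having pairwise distinct diagonal entries. $\operatorname{diag}(r)$ is the diagonal matrix with the diagonal entries of $r$. *)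

theory Defs
  imports "HOL-Analysis.Analysis"
begin

text \<open>Matrices are indexed by a finite linearly ordered type 'n (a copy of {1..n}).
  b = upper triangular matrices; b* = gl_n / n+ is represented by its canonical
  representatives, the lower triangular matrices (entries above the diagonal zero).\<close>

definition upper_tri :: "('a::zero)^('n::{finite,linorder})^('n::{finite,linorder}) \<Rightarrow> bool" where
  "upper_tri M \<longleftrightarrow> (\<forall>a b. b < a \<longrightarrow> M $ a $ b = 0)"

definition lower_tri :: "('a::zero)^('n::{finite,linorder})^('n::{finite,linorder}) \<Rightarrow> bool" where
  "lower_tri M \<longleftrightarrow> (\<forall>a b. a < b \<longrightarrow> M $ a $ b = 0)"

definition mod_nplus :: "('a::zero)^('n::{finite,linorder})^('n::{finite,linorder}) \<Rightarrow> 'a^('n::{finite,linorder})^('n::{finite,linorder})" where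
  "mod_nplus M = (\<chi> a b. if a < b then 0 else M $ a $ b)"

definition diag_part :: "('a::zero)^('n::finite)^('n::finite) \<Rightarrow> 'a^('n::finite)^('n::finite)" where
  "diag_part M = (\<chi> a b. if a = b then M $ a $ b else 0)"

definition is_diag :: "('a::zero)^('n::finite)^('n::finite) \<Rightarrow> bool" where
  "is_diag M \<longleftrightarrow> (\<forall>a b. a \<noteq> b \<longrightarrow> M $ a $ b = 0)"

definition outer :: "complex^('n::finite) \<Rightarrow> complex^('n::finite) \<Rightarrow> complex^('n::finite)^('n::finite)" where
  "outer i j = (\<chi> a b. i $ a * j $ b)"

definition borel :: "(complex^('n::{finite,linorder})^('n::{finite,linorder})) set" where
  "borel = {g. invertible g \<and> upper_tri g}"

type_synonym 'n quad = "(complex^'n^'n) \<times> (complex^'n^'n) \<times> (complex^'n) \<times> (complex^'n)"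

definition B_act :: "complex^('n::{finite,linorder})^('n::{finite,linorder}) \<Rightarrow> ('n::{finite,linorder}) quad \<Rightarrow> ('n::{finite,linorder}) quad" where
  "B_act g x = (case x of (r, s, i, j) \<Rightarrow>
     (g ** r ** matrix_inv g, mod_nplus (g ** s ** matrix_inv g), g *v i, j v* matrix_inv g))"

definition B_orbit :: "('n::{finite,linorder}) quad \<Rightarrow> ('n::{finite,linorder}) quad set" where
  "B_orbit x = (\<lambda>g. B_act g x) ` borel"

definition moment :: "('n::{finite,linorder}) quad \<Rightarrow> complex^('n::{finite,linorder})^('n::{finite,linorder})" where
  "moment x = (case x of (r, s, i, j) \<Rightarrow> mod_nplus (r ** s - s ** r + outer i j))"

definition mu_zero_rss :: "('n::{finite,linorder}) quad set" where
  "mu_zero_rss = {(r, s, i, j). upper_tri r \<and> lower_tri s \<and> moment (r, s, i, j) = 0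
                    \<and> (\<forall>a b. a \<noteq> b \<longrightarrow> r $ a $ a \<noteq> r $ b $ b)}"

end

theory Submission
  imports Defs
begin

text \<open>An upper triangular r with distinct diagonal entries is conjugate to diag(r) by a
  unipotent upper triangular u, whose rows are left eigenvectors of r. As the moment map is
  B-equivariant, acting by u gives a zero (diag(r), s, i, j) of \<mu>, where the moment equations read
  (r_aa - r_bb) s_ab + i_a j_b = 0 for b \<le> a. So i_a j_a = 0, and a nonzero subdiagonal entry s_ab
  forces i_a \<noteq> 0 \<noteq> j_b. Hence a one-parameter subgroup of the torus scales i and j by e and the
  subdiagonal part of s by e^2; letting e \<rightarrow> 0 gives (diag(r), diag(s), 0, 0).\<close>

lemma finite_linorder_less_induct [case_names less]:
  fixes a :: "'a::{finite,linorder}"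
  assumes "\<And>a. (\<And>b. b < a \<Longrightarrow> P b) \<Longrightarrow> P a"
  shows "P a"
proof -
  have "wf ({(x, y :: 'a). y < x}\<inverse>)"
    by (rule wf_converse) (auto simp: irrefl_def trans_def)
  then show ?thesis
    by (induction a rule: wf_induct_rule) (use assms in auto)
qed

lemma finite_linorder_greater_induct [case_names greater]:
  fixes a :: "'a::{finite,linorder}"
  assumes "\<And>a. (\<And>b. a < b \<Longrightarrow> P b) \<Longrightarrow> P a"
  shows "P a"
proof -
  have "wf ({(x, y :: 'a). x < y}\<inverse>)"
    by (rule wf_converse) (auto simp: irrefl_def trans_def)
  then show ?thesis
    by (induction a rule: wf_induct_rule) (use assms in auto)
qed

lemma sum_UNIV_single:
  fixes f :: "'n::finite \<Rightarrow> 'a::comm_monoid_add"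
  assumes "\<And>c. c \<noteq> a \<Longrightarrow> f c = 0"
  shows "sum f UNIV = f a"
  using sum.mono_neutral_left[of UNIV "{a}" f] assms by simp

definition diag_mat :: "('n::finite \<Rightarrow> 'a::zero) \<Rightarrow> 'a^'n^'n" where
  "diag_mat f = (\<chi> a b. if a = b then f a else 0)"

lemma diag_mat_mult_left: "(diag_mat f ** (X :: 'a::semiring_1^'m::finite^'n::finite)) $ a $ b = f a * X $ a $ b"
  unfolding matrix_matrix_mult_def diag_mat_def by (simp, subst sum_UNIV_single[where a = a]) auto

lemma diag_mat_mult_right: "((X :: 'a::semiring_1^'n::finite^'m::finite) ** diag_mat f) $ a $ b = X $ a $ b * f b"
  unfolding matrix_matrix_mult_def diag_mat_def by (simp, subst sum_UNIV_single[where a = b]) auto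

lemma diag_mat_vector_mult: "(diag_mat f *v (v :: 'a::semiring_1^'n::finite)) $ a = f a * v $ a"
  unfolding matrix_vector_mult_def diag_mat_def by (simp, subst sum_UNIV_single[where a = a]) auto

lemma vector_matrix_mult_diag_mat: "((v :: 'a::semiring_1^'n::finite) v* diag_mat f) $ b = v $ b * f b"
  unfolding vector_matrix_mult_def diag_mat_def by (simp, subst sum_UNIV_single[where a = b]) auto

lemma diag_part_eq_diag_mat: "diag_part M = diag_mat (\<lambda>a. M $ a $ a)"
  unfolding diag_part_def diag_mat_def by (simp add: vec_eq_iff)

lemma is_diag_diag_part: "is_diag (diag_part M)"
  unfolding is_diag_def diag_part_def by simp

lemma matrix_add_rdistrib: "((A :: 'a::semiring_1^'n::finite^'m) + B) ** (C :: 'a^'p^'n) = A ** C + B ** C"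
  by (vector matrix_matrix_mult_def sum.distrib[symmetric] distrib_right)

lemma matrix_diff_ldistrib: "(C :: 'a::ring_1^'n::finite^'m) ** (A - B) = C ** A - C ** B"
  by (vector matrix_matrix_mult_def sum_subtractf[symmetric] right_diff_distrib)

lemma matrix_diff_rdistrib: "((A :: 'a::ring_1^'n::finite^'m) - B) ** (C :: 'a^'p^'n) = A ** C - B ** C"
  by (vector matrix_matrix_mult_def sum_subtractf[symmetric] left_diff_distrib)

lemma outer_conj: "(g :: complex^'n::finite^'m::finite) ** outer i j ** h = outer (g *v i) (j v* h)"
  by (simp add: vec_eq_iff matrix_matrix_mult_def outer_def matrix_vector_mult_def vector_matrix_mult_def
      sum_distrib_left sum_distrib_right mult_ac)

lemma matrix_inv_right:
  fixes A :: "'a::field^'n::finite^'n"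
  assumes "invertible A"
  shows "A ** matrix_inv A = mat 1"
  using assms unfolding invertible_def matrix_inv_def by (metis (mono_tags, lifting) someI_ex)

lemma matrix_inv_left:
  fixes A :: "'a::field^'n::finite^'n"
  assumes "invertible A"
  shows "matrix_inv A ** A = mat 1"
  using assms matrix_inv_right matrix_left_right_inverse by blast

lemma matrix_inv_unique:
  fixes A B :: "'a::field^'n::finite^'n"
  assumes "A ** B = mat 1"
  shows "matrix_inv A = B"
proof -
  have inv: "invertible A"
    using assms invertible_right_inverse by blast
  have "matrix_inv A = (matrix_inv A ** A) ** B"
    using assms by (simp flip: matrix_mul_assoc)
  then show ?thesis
    using matrix_inv_left[OF inv] by simp
qed

lemma matrix_inv_mult:
  fixes A B :: "'a::field^'n::finite^'n"
  assumes "invertible A" "invertible B"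
  shows "matrix_inv (A ** B) = matrix_inv B ** matrix_inv A"
proof (rule matrix_inv_unique)
  have "A ** B ** (matrix_inv B ** matrix_inv A) = A ** (B ** matrix_inv B) ** matrix_inv A"
    by (simp add: matrix_mul_assoc)
  then show "A ** B ** (matrix_inv B ** matrix_inv A) = mat 1"
    using assms by (simp add: matrix_inv_right)
qed

lemma matrix_inv_diag_mat:
  assumes "\<And>a. f a \<noteq> (0 :: 'a::field)"
  shows "matrix_inv (diag_mat f :: 'a^'n::finite^'n) = diag_mat (\<lambda>a. inverse (f a))"
  by (rule matrix_inv_unique) (simp add: vec_eq_iff diag_mat_mult_left mat_def, simp add: diag_mat_def assms)

definition strict_upper_tri :: "('a::zero)^('n::{finite,linorder})^('n::{finite,linorder}) \<Rightarrow> bool" where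
  "strict_upper_tri M \<longleftrightarrow> (\<forall>a b. \<not> a < b \<longrightarrow> M $ a $ b = 0)"

lemma upper_tri_diag_mat: "upper_tri (diag_mat f :: 'a::zero^('n::{finite,linorder})^('n::{finite,linorder}))"
  unfolding upper_tri_def diag_mat_def by simp

lemma upper_tri_mult:
  fixes A B :: "'a::semiring_1^('n::{finite,linorder})^('n::{finite,linorder})"
  assumes "upper_tri A" "upper_tri B"
  shows "upper_tri (A ** B)"
  unfolding upper_tri_def
proof (intro allI impI)
  fix a b :: 'n assume "b < a"
  have "A $ a $ c * B $ c $ b = 0" for c
    using assms \<open>b < a\<close> unfolding upper_tri_def by (cases "c < a") (auto dest: le_less_trans)
  then show "(A ** B) $ a $ b = 0"
    by (simp add: matrix_matrix_mult_def)
qed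

lemma strict_upper_tri_mult_upper_tri:
  fixes A B :: "'a::semiring_1^('n::{finite,linorder})^('n::{finite,linorder})"
  assumes "strict_upper_tri A" "upper_tri B"
  shows "strict_upper_tri (A ** B)"
  unfolding strict_upper_tri_def
proof (intro allI impI)
  fix a b :: 'n assume "\<not> a < b"
  have "A $ a $ c * B $ c $ b = 0" for c
    using assms \<open>\<not> a < b\<close> unfolding strict_upper_tri_def upper_tri_def
    by (cases "a < c") (auto dest: less_trans)
  then show "(A ** B) $ a $ b = 0"
    by (simp add: matrix_matrix_mult_def)
qed

lemma upper_tri_mult_strict_upper_tri:
  fixes A B :: "'a::semiring_1^('n::{finite,linorder})^('n::{finite,linorder})"
  assumes "upper_tri A" "strict_upper_tri B"
  shows "strict_upper_tri (A ** B)"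
  unfolding strict_upper_tri_def
proof (intro allI impI)
  fix a b :: 'n assume "\<not> a < b"
  have "A $ a $ c * B $ c $ b = 0" for c
    using assms \<open>\<not> a < b\<close> unfolding strict_upper_tri_def upper_tri_def
    by (cases "c < a") (auto dest: le_less_trans)
  then show "(A ** B) $ a $ b = 0"
    by (simp add: matrix_matrix_mult_def)
qed

lemma strict_upper_tri_diff:
  "strict_upper_tri A \<Longrightarrow> strict_upper_tri B \<Longrightarrow> strict_upper_tri (A - (B :: 'a::ab_group_add^_^_))"
  unfolding strict_upper_tri_def by simp

lemma mod_nplus_eq_iff:
  "mod_nplus A = mod_nplus B \<longleftrightarrow> strict_upper_tri (A - (B :: 'a::ab_group_add^_^_))"
  unfolding mod_nplus_def strict_upper_tri_def by (auto simp: vec_eq_iff)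

lemma lower_tri_mod_nplus: "lower_tri (mod_nplus M)"
  unfolding lower_tri_def mod_nplus_def by simp

lemma mod_nplus_lower_tri: "lower_tri M \<Longrightarrow> mod_nplus M = M"
  unfolding lower_tri_def mod_nplus_def by (simp add: vec_eq_iff)

lemma mod_nplus_zero [simp]: "mod_nplus 0 = 0"
  by (simp add: mod_nplus_def vec_eq_iff)

lemma mod_nplus_conj:
  fixes g h X :: "'a::ring_1^('n::{finite,linorder})^('n::{finite,linorder})"
  assumes "upper_tri g" "upper_tri h"
  shows "mod_nplus (g ** mod_nplus X ** h) = mod_nplus (g ** X ** h)"
proof -
  have "strict_upper_tri (mod_nplus X - X)"
    using mod_nplus_eq_iff mod_nplus_lower_tri[OF lower_tri_mod_nplus] by blast
  then have "strict_upper_tri (g ** (mod_nplus X - X) ** h)"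
    using assms by (intro strict_upper_tri_mult_upper_tri upper_tri_mult_strict_upper_tri)
  then show ?thesis
    by (simp add: mod_nplus_eq_iff matrix_diff_ldistrib matrix_diff_rdistrib)
qed

lemma invertible_upper_tri:
  fixes g :: "'a::field^('n::{finite,linorder})^('n::{finite,linorder})"
  assumes up: "upper_tri g" and diag: "\<And>a. g $ a $ a \<noteq> 0"
  shows "invertible g"
proof -
  have "x = 0" if x: "g *v x = 0" for x
  proof -
    have "x $ a = 0" for a
    proof (induction a rule: finite_linorder_greater_induct)
      case (greater a)
      have "g $ a $ c * x $ c = 0" if "c \<noteq> a" for c
        using that up greater unfolding upper_tri_def by (cases "c < a") auto
      then have "(g *v x) $ a = g $ a $ a * x $ a"
        unfolding matrix_vector_mult_def by (simp add: sum_UNIV_single[where a = a])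
      then show ?case
        using x diag by simp
    qed
    then show ?thesis
      by (simp add: vec_eq_iff)
  qed
  then show ?thesis
    using matrix_left_invertible_ker invertible_left_inverse by blast
qed

text \<open>Column by column from the left: if the columns of w before b vanish below the diagonal,
  then entry (a, b) of w ** g = mat 1 with a \<ge> b reads w $ a $ b * g $ b $ b.\<close>
lemma upper_tri_left_inverse:
  fixes g w :: "'a::field^('n::{finite,linorder})^('n::{finite,linorder})"
  assumes up: "upper_tri g" and wg: "w ** g = mat 1"
  shows "upper_tri w"
proof -
  have "\<forall>a. b < a \<longrightarrow> w $ a $ b = 0" for b
  proof (induction b rule: finite_linorder_less_induct)
    case (less b)
    have entry: "w $ a $ b * g $ b $ b = (if a = b then 1 else 0)" if "b \<le> a" for a
    proof -
      have "w $ a $ c * g $ c $ b = 0" if "c \<noteq> b" for c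
        using that up less \<open>b \<le> a\<close> unfolding upper_tri_def
        by (cases "c < b") (auto dest: less_le_trans)
      then have "(w ** g) $ a $ b = w $ a $ b * g $ b $ b"
        unfolding matrix_matrix_mult_def by (simp add: sum_UNIV_single[where a = b])
      then show ?thesis
        using wg by (simp add: mat_def)
    qed
    from entry[of b] have "g $ b $ b \<noteq> 0"
      by auto
    show ?case
    proof (intro allI impI)
      fix a assume "b < a"
      then have "w $ a $ b * g $ b $ b = 0"
        using entry[OF less_imp_le] by simp
      with \<open>g $ b $ b \<noteq> 0\<close> show "w $ a $ b = 0"
        by simp
    qed
  qed
  then show ?thesis
    unfolding upper_tri_def by blast
qed

lemma upper_tri_matrix_inv:
  fixes g :: "'a::field^('n::{finite,linorder})^('n::{finite,linorder})"
  assumes "invertible g" "upper_tri g"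
  shows "upper_tri (matrix_inv g)"
  using upper_tri_left_inverse matrix_inv_left assms by blast

lemma borel_mult: "g \<in> borel \<Longrightarrow> h \<in> borel \<Longrightarrow> g ** h \<in> borel"
  unfolding borel_def by (simp add: invertible_mult upper_tri_mult)

lemma diag_mat_in_borel:
  assumes "\<And>a. f a \<noteq> 0"
  shows "diag_mat f \<in> borel"
  unfolding borel_def
proof (intro CollectI conjI upper_tri_diag_mat invertible_upper_tri)
  show "diag_mat f $ a $ a \<noteq> 0" for a
    using assms by (simp add: diag_mat_def)
qed

lemma B_act_mult:
  assumes "g \<in> borel" "h \<in> borel"
  shows "B_act (g ** h) x = B_act g (B_act h x)"
proof -
  have inv: "invertible g" "invertible h" and up: "upper_tri g" "upper_tri (matrix_inv g)"
    using assms upper_tri_matrix_inv unfolding borel_def by auto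
  obtain r s i j where x: "x = (r, s, i, j)"
    by (cases x) auto
  have "mod_nplus (g ** mod_nplus (h ** s ** matrix_inv h) ** matrix_inv g)
          = mod_nplus (g ** h ** s ** (matrix_inv h ** matrix_inv g))"
    using mod_nplus_conj[OF up] by (simp add: matrix_mul_assoc)
  then show ?thesis
    unfolding x B_act_def using inv
    by (simp add: matrix_inv_mult matrix_mul_assoc matrix_vector_mul_assoc vector_matrix_mul_assoc)
qed

lemma B_orbit_B_act_subset: "h \<in> borel \<Longrightarrow> B_orbit (B_act h x) \<subseteq> B_orbit x"
  unfolding B_orbit_def by (auto simp flip: B_act_mult intro: borel_mult)

lemma moment_B_act:
  assumes g: "g \<in> borel" and r: "upper_tri r"
  shows "moment (B_act g (r, s, i, j)) = mod_nplus (g ** moment (r, s, i, j) ** matrix_inv g)"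
proof -
  define g' where "g' = matrix_inv g"
  have g'g: "g' ** g = mat 1" and up: "upper_tri g" "upper_tri g'"
    using g matrix_inv_left upper_tri_matrix_inv unfolding borel_def g'_def by auto
  define R S where "R = g ** r ** g'" and "S = g ** s ** g'"
  have "upper_tri R"
    unfolding R_def using up r by (intro upper_tri_mult)
  moreover have "strict_upper_tri (mod_nplus S - S)"
    using mod_nplus_eq_iff mod_nplus_lower_tri[OF lower_tri_mod_nplus] by blast
  ultimately have "strict_upper_tri (R ** (mod_nplus S - S) - (mod_nplus S - S) ** R)"
    by (blast intro: strict_upper_tri_diff upper_tri_mult_strict_upper_tri strict_upper_tri_mult_upper_tri)
  then have "mod_nplus (R ** mod_nplus S - mod_nplus S ** R + outer (g *v i) (j v* g'))
               = mod_nplus (R ** S - S ** R + outer (g *v i) (j v* g'))"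
    by (simp add: mod_nplus_eq_iff matrix_diff_ldistrib matrix_diff_rdistrib algebra_simps)
  also have "R ** S - S ** R + outer (g *v i) (j v* g') = g ** (r ** s - s ** r + outer i j) ** g'"
  proof -
    have "R ** S = g ** (r ** s) ** g'" "S ** R = g ** (s ** r) ** g'"
      unfolding R_def S_def by (simp_all add: matrix_mul_assoc) (simp_all flip: matrix_mul_assoc add: g'g)
    then show ?thesis
      by (simp add: outer_conj matrix_add_ldistrib matrix_add_rdistrib matrix_diff_ldistrib matrix_diff_rdistrib)
  qed
  finally show ?thesis
    unfolding moment_def B_act_def R_def S_def g'_def using mod_nplus_conj[OF up, unfolded g'_def] by simp
qed

lemma left_eigenvector_insert_max:
  fixes r :: "'a::field^('n::{finite,linorder})^('n::{finite,linorder})"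
  assumes up: "upper_tri r" and b: "\<And>c. c \<in> A \<Longrightarrow> c < b" and ne: "r $ b $ b \<noteq> \<theta>"
    and supp: "\<And>c. x c \<noteq> 0 \<Longrightarrow> c \<in> A"
    and eq: "\<And>c. c \<in> A \<Longrightarrow> (\<Sum>d\<in>UNIV. x d * r $ d $ c) = \<theta> * x c"
  obtains l where "\<And>c. c \<in> insert b A \<Longrightarrow>
    (\<Sum>d\<in>UNIV. (x d + (if d = b then l else 0)) * r $ d $ c) = \<theta> * (x c + (if c = b then l else 0))"
proof
  define l where "l = (\<Sum>d\<in>UNIV. x d * r $ d $ b) / (\<theta> - r $ b $ b)"
  fix c assume c: "c \<in> insert b A"
  have "(\<Sum>d\<in>UNIV. (x d + (if d = b then l else 0)) * r $ d $ c)
          = (\<Sum>d\<in>UNIV. x d * r $ d $ c) + l * r $ b $ c"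
    by (simp add: distrib_right sum.distrib if_distrib[of "\<lambda>y. y * _"] cong: if_cong)
  also have "\<dots> = \<theta> * (x c + (if c = b then l else 0))"
  proof (cases "c = b")
    case True
    have "x b = 0"
      using supp b by blast
    with True ne show ?thesis
      unfolding l_def by (simp add: field_simps)
  next
    case False
    then have "c \<in> A" "c < b"
      using c b by auto
    then show ?thesis
      using eq[of c] up False unfolding upper_tri_def by simp
  qed
  finally show "(\<Sum>d\<in>UNIV. (x d + (if d = b then l else 0)) * r $ d $ c)
                  = \<theta> * (x c + (if c = b then l else 0))" .
qed

lemma upper_tri_partial_left_eigenvector:
  fixes r :: "'a::field^('n::{finite,linorder})^('n::{finite,linorder})"
  assumes up: "upper_tri r" and dist: "\<And>c. c \<noteq> a \<Longrightarrow> r $ c $ c \<noteq> r $ a $ a"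
    and "finite A" "a \<in> A"
  shows "\<exists>x. x a = 1 \<and> (\<forall>c. x c \<noteq> 0 \<longrightarrow> a \<le> c \<and> c \<in> A) \<and>
           (\<forall>b\<in>A. (\<Sum>c\<in>UNIV. x c * r $ c $ b) = r $ a $ a * x b)"
  using assms(3,4)
proof (induction A rule: finite_linorder_max_induct)
  case empty
  then show ?case by simp
next
  case (insert b A)
  show ?case
  proof (cases "a = b")
    case True
    define x :: "'n \<Rightarrow> 'a" where "x c = (if c = a then 1 else 0)" for c
    have "(\<Sum>c\<in>UNIV. x c * r $ c $ d) = r $ a $ d" for d
      by (simp add: x_def if_distrib[of "\<lambda>y. y * _"] cong: if_cong)
    moreover have "r $ a $ d = r $ a $ a * x d" if "d \<in> insert b A" for d
    proof (cases "d = a")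
      case False
      then have "d < a"
        using that True insert.hyps(2) by auto
      with False show ?thesis
        using up unfolding upper_tri_def x_def by simp
    qed (simp add: x_def)
    ultimately have "\<forall>d\<in>insert b A. (\<Sum>c\<in>UNIV. x c * r $ c $ d) = r $ a $ a * x d"
      by simp
    moreover have "x a = 1" "\<forall>c. x c \<noteq> 0 \<longrightarrow> a \<le> c \<and> c \<in> insert b A"
      using True by (simp_all add: x_def)
    ultimately show ?thesis
      by blast
  next
    case False
    with insert obtain x where x: "x a = 1" "\<forall>c. x c \<noteq> 0 \<longrightarrow> a \<le> c \<and> c \<in> A"
      "\<forall>b\<in>A. (\<Sum>c\<in>UNIV. x c * r $ c $ b) = r $ a $ a * x b"
      by auto
    have "r $ b $ b \<noteq> r $ a $ a"
      using dist False by auto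
    then obtain l where l: "\<And>c. c \<in> insert b A \<Longrightarrow>
        (\<Sum>d\<in>UNIV. (x d + (if d = b then l else 0)) * r $ d $ c) = r $ a $ a * (x c + (if c = b then l else 0))"
      using left_eigenvector_insert_max[OF up insert.hyps(2)[rule_format], where \<theta> = "r $ a $ a" and x = x] x(2,3)
      by blast
    have "a < b"
      using False insert by auto
    then have "(x a + (if a = b then l else 0)) = 1"
      "\<forall>c. x c + (if c = b then l else 0) \<noteq> 0 \<longrightarrow> a \<le> c \<and> c \<in> insert b A"
      using x(1,2) by auto
    with l show ?thesis
      by (intro exI[of _ "\<lambda>d. x d + (if d = b then l else 0)"]) simp
  qed
qed

lemma upper_tri_left_eigenvector:
  fixes r :: "'a::field^('n::{finite,linorder})^('n::{finite,linorder})"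
  assumes up: "upper_tri r" and dist: "\<And>c. c \<noteq> a \<Longrightarrow> r $ c $ c \<noteq> r $ a $ a"
  obtains x where "x a = 1" "\<And>c. x c \<noteq> 0 \<Longrightarrow> a \<le> c"
    "\<And>b. (\<Sum>c\<in>UNIV. x c * r $ c $ b) = r $ a $ a * x b"
proof -
  obtain x where "x a = 1" "\<forall>c. x c \<noteq> 0 \<longrightarrow> a \<le> c"
    "\<forall>b. (\<Sum>c\<in>UNIV. x c * r $ c $ b) = r $ a $ a * x b"
    using upper_tri_partial_left_eigenvector[OF up dist finite UNIV_I] by blast
  then show ?thesis
    by (intro that[of x]) auto
qed

lemma unit_upper_tri_conj_diag_part:
  fixes r :: "'a::field^('n::{finite,linorder})^('n::{finite,linorder})"
  assumes up: "upper_tri r" and dist: "\<And>a b. a \<noteq> b \<Longrightarrow> r $ a $ a \<noteq> r $ b $ b"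
  obtains u where "upper_tri u" "\<And>a. u $ a $ a = 1" "u ** r = diag_part r ** u"
proof -
  have "\<exists>x. x a = 1 \<and> (\<forall>c. x c \<noteq> 0 \<longrightarrow> a \<le> c) \<and>
          (\<forall>b. (\<Sum>c\<in>UNIV. x c * r $ c $ b) = r $ a $ a * x b)" for a
  proof (rule upper_tri_left_eigenvector[OF up, where a = a])
    show "\<And>c. c \<noteq> a \<Longrightarrow> r $ c $ c \<noteq> r $ a $ a"
      using dist by blast
  qed blast
  then obtain X where X: "\<And>a. X a a = 1" "\<And>a c. X a c \<noteq> 0 \<Longrightarrow> a \<le> c"
    "\<And>a b. (\<Sum>c\<in>UNIV. X a c * r $ c $ b) = r $ a $ a * X a b"
    using choice[of "\<lambda>a x. x a = 1 \<and> (\<forall>c. x c \<noteq> 0 \<longrightarrow> a \<le> c) \<and>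
          (\<forall>b. (\<Sum>c\<in>UNIV. x c * r $ c $ b) = r $ a $ a * x b)"] by blast
  show ?thesis
  proof
    show "upper_tri (\<chi> a c. X a c)"
      unfolding upper_tri_def using X(2) by (auto simp flip: not_le)
    show "(\<chi> a c. X a c) $ a $ a = 1" for a
      using X(1) by simp
    show "(\<chi> a c. X a c) ** r = diag_part r ** (\<chi> a c. X a c)"
      by (simp add: vec_eq_iff diag_part_eq_diag_mat diag_mat_mult_left) (simp add: matrix_matrix_mult_def X(3))
  qed
qed

lemma moment_diag_mat_entry:
  assumes "moment (diag_mat d, s, i, j) = 0" "b \<le> a"
  shows "(d a - d b) * s $ a $ b + i $ a * j $ b = 0"
proof -
  have "mod_nplus (diag_mat d ** s - s ** diag_mat d + outer i j) $ a $ b = 0"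
    using assms(1) by (simp add: moment_def)
  then have "(diag_mat d ** s - s ** diag_mat d + outer i j) $ a $ b = 0"
    using leD[OF assms(2)] unfolding mod_nplus_def by simp
  then show ?thesis
    by (simp add: outer_def diag_mat_mult_left diag_mat_mult_right algebra_simps)
qed

lemma B_act_diag_mat:
  fixes \<tau> d :: "'n::{finite,linorder} \<Rightarrow> complex"
  assumes \<tau>: "\<And>a. \<tau> a \<noteq> 0" and s: "lower_tri s"
  shows "B_act (diag_mat \<tau>) (diag_mat d, s, i, j)
           = (diag_mat d, \<chi> a b. \<tau> a * s $ a $ b / \<tau> b, \<chi> a. \<tau> a * i $ a, \<chi> b. j $ b / \<tau> b)"
proof -
  have r: "diag_mat \<tau> ** diag_mat d ** diag_mat (\<lambda>a. inverse (\<tau> a)) = diag_mat d"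
    using \<tau> by (simp add: vec_eq_iff diag_mat_mult_left diag_mat_mult_right) (simp add: diag_mat_def)
  have "diag_mat \<tau> ** s ** diag_mat (\<lambda>a. inverse (\<tau> a)) = (\<chi> a b. \<tau> a * s $ a $ b / \<tau> b)"
    by (simp add: vec_eq_iff diag_mat_mult_left diag_mat_mult_right field_simps)
  moreover have "lower_tri (\<chi> a b. \<tau> a * s $ a $ b / \<tau> b)"
    using s unfolding lower_tri_def by simp
  ultimately have "mod_nplus (diag_mat \<tau> ** s ** diag_mat (\<lambda>a. inverse (\<tau> a)))
                     = (\<chi> a b. \<tau> a * s $ a $ b / \<tau> b)"
    by (simp add: mod_nplus_lower_tri)
  with r show ?thesis
    unfolding B_act_def matrix_inv_diag_mat[OF \<tau>]
    by (simp add: vec_eq_iff diag_mat_vector_mult vector_matrix_mult_diag_mat field_simps)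
qed

lemma torus_scaling_in_B_orbit:
  fixes d :: "'n::{finite,linorder} \<Rightarrow> complex"
  assumes d: "inj d" and s: "lower_tri s" and mom: "moment (diag_mat d, s, i, j) = 0" and "e \<noteq> 0"
  shows "(diag_mat d, \<chi> a b. s $ a $ b * (if a = b then 1 else e * e), e *s i, e *s j)
           \<in> B_orbit (diag_mat d, s, i, j)"
proof -
  have ij: "i $ a * j $ a = 0" for a
    using moment_diag_mat_entry[OF mom, of a a] by simp
  have ij_below: "i $ a \<noteq> 0 \<and> j $ b \<noteq> 0" if "b < a" "s $ a $ b \<noteq> 0" for a b
  proof -
    have "(d a - d b) * s $ a $ b + i $ a * j $ b = 0"
      using moment_diag_mat_entry[OF mom] that(1) by simp
    moreover have "d a \<noteq> d b"
      using d that(1) by (metis inj_eq less_irrefl)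
    ultimately show ?thesis
      using that(2) by auto
  qed
  \<comment> \<open>Coordinates with i \<noteq> 0 are scaled by e, those with j \<noteq> 0 by 1/e; no coordinate has both.\<close>
  define \<tau> where "\<tau> a = (if i $ a \<noteq> 0 then e else if j $ a \<noteq> 0 then inverse e else 1)" for a
  have \<tau>: "\<tau> a \<noteq> 0" for a
    using \<open>e \<noteq> 0\<close> by (simp add: \<tau>_def)
  have "\<tau> a * s $ a $ b / \<tau> b = s $ a $ b * (if a = b then 1 else e * e)" for a b
  proof (cases "b < a \<and> s $ a $ b \<noteq> 0")
    case True
    with ij_below ij have "i $ a \<noteq> 0" "j $ b \<noteq> 0" "i $ b = 0"
      by (metis mult_eq_0_iff)+
    moreover have "a \<noteq> b"
      using True by blast
    ultimately show ?thesis
      by (simp add: \<tau>_def divide_inverse)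
  next
    case False
    then have "a = b \<or> s $ a $ b = 0"
      using s unfolding lower_tri_def by (metis neqE)
    with \<tau> show ?thesis
      by auto
  qed
  moreover have "\<tau> a * i $ a = e * i $ a" for a
    by (simp add: \<tau>_def)
  moreover have "j $ b / \<tau> b = e * j $ b" for b
    using ij[of b] \<open>e \<noteq> 0\<close> by (auto simp: \<tau>_def divide_inverse)
  ultimately have "B_act (diag_mat \<tau>) (diag_mat d, s, i, j)
                     = (diag_mat d, \<chi> a b. s $ a $ b * (if a = b then 1 else e * e), e *s i, e *s j)"
    by (simp add: B_act_diag_mat[OF \<tau> s] vec_eq_iff)
  from this[symmetric] show ?thesis
    unfolding B_orbit_def by (rule image_eqI[OF _ diag_mat_in_borel[OF \<tau>]])
qed

lemma torus_degeneration:
  fixes d :: "'n::{finite,linorder} \<Rightarrow> complex"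
  assumes "inj d" "lower_tri s" "moment (diag_mat d, s, i, j) = 0"
  shows "(diag_mat d, diag_part s, 0, 0) \<in> closure (B_orbit (diag_mat d, s, i, j))"
proof -
  define F where "F e = (diag_mat d, \<chi> a b. s $ a $ b * (if a = b then 1 else e * e), e *s i, e *s j)"
    for e :: complex
  have "(F \<longlongrightarrow> F 0) (at 0)"
    unfolding F_def vector_scalar_mult_def by (intro tendsto_intros) (auto intro!: tendsto_eq_intros)
  moreover have "F 0 = (diag_mat d, diag_part s, 0, 0)"
    unfolding F_def diag_part_def by (simp add: vec_eq_iff)
  moreover have "\<forall>\<^sub>F e in at 0. F e \<in> closure (B_orbit (diag_mat d, s, i, j))"
    using torus_scaling_in_B_orbit[OF assms] closure_subset unfolding eventually_at_filter F_def
    by (blast intro: always_eventually)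
  ultimately show ?thesis
    using Lim_in_closed_set[OF closed_closure] by fastforce
qed

lemma mu_zero_rss_B_act_diag_part:
  assumes "(r, s, i, j) \<in> mu_zero_rss"
  obtains u s' i' j' where "u \<in> borel" "B_act u (r, s, i, j) = (diag_part r, s', i', j')"
    "lower_tri s'" "moment (diag_part r, s', i', j') = 0"
proof -
  from assms have up: "upper_tri r" and mom: "moment (r, s, i, j) = 0"
    and dist: "\<And>a b. a \<noteq> b \<Longrightarrow> r $ a $ a \<noteq> r $ b $ b"
    unfolding mu_zero_rss_def by auto
  obtain u where u: "upper_tri u" "\<And>a. u $ a $ a = 1" "u ** r = diag_part r ** u"
    using unit_upper_tri_conj_diag_part[OF up dist] by blast
  then have uB: "u \<in> borel"
    unfolding borel_def by (simp add: invertible_upper_tri)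
  have "u ** r ** matrix_inv u = diag_part r ** (u ** matrix_inv u)"
    using u(3) by (simp add: matrix_mul_assoc)
  then have x': "B_act u (r, s, i, j)
                   = (diag_part r, mod_nplus (u ** s ** matrix_inv u), u *v i, j v* matrix_inv u)"
    using uB unfolding borel_def B_act_def by (simp add: matrix_inv_right)
  show ?thesis
  proof (rule that[OF uB x' lower_tri_mod_nplus])
    show "moment (diag_part r, mod_nplus (u ** s ** matrix_inv u), u *v i, j v* matrix_inv u) = 0"
      using moment_B_act[OF uB up, of s i j] mom unfolding x' by simp
  qed
qed

theorem mainTheorem18:
  fixes r s :: "complex^('n::{finite,linorder})^('n::{finite,linorder})" and i j :: "complex^('n::{finite,linorder})"
  assumes "(r, s, i, j) \<in> mu_zero_rss"
  shows "\<exists>d. is_diag d \<and> (diag_part r, d, 0, 0) \<in> closure (B_orbit (r, s, i, j))"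
proof -
  obtain u s' i' j' where u: "u \<in> borel" and x': "B_act u (r, s, i, j) = (diag_part r, s', i', j')"
    and "lower_tri s'" "moment (diag_part r, s', i', j') = 0"
    using mu_zero_rss_B_act_diag_part[OF assms] by blast
  moreover have "inj (\<lambda>a. r $ a $ a)"
    using assms unfolding mu_zero_rss_def by (auto intro: injI)
  ultimately have "(diag_part r, diag_part s', 0, 0) \<in> closure (B_orbit (B_act u (r, s, i, j)))"
    using torus_degeneration unfolding x' diag_part_eq_diag_mat[of r] by blast
  also have "\<dots> \<subseteq> closure (B_orbit (r, s, i, j))"
    by (intro closure_mono B_orbit_B_act_subset u)
  finally show ?thesis
    using is_diag_diag_part by blast
qed

end
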